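(* Let $R$ be a QNA with Goodearl–Yakimov elements $y_1,\ldots,y_N$. For all $i,j\in[1,N]$ with $i\neq j$, we have $y_i\notin y_jR$.
   Context: ${\mathbb K}$ is a field of characteristic $0$. A quantum nilpotent algebra (QNA) is an iterated Ore extension $R={\mathbb K}[x_1][x_2;\sigma_2,\delta_2]\cdots[x_N;\sigma_N,\delta_N]$, where $R_k={\mathbb K}[x_1][x_2;\sigma_2,\delta_2]\cdots[x_k;\sigma_k,\delta_k]$ ($R_0={\mathbb K}$), $\sigma_k$ is a ${\mathbb K}$-automorphism and $\delta_k$ a $\sigma_k$-derivation of $R_{k-1}$, together with a torus $\mathcal H$ acting rationally by ${\mathbb K}$-automorphisms on $R$ with each $x_i$ an $\mathcal H$-eigenvector, such that: (i) $\sigma_k(x_j)=\lambda_{kj}x_j$ for $j<k$, with $\lambda_{kj}\in{\mathbb K}^*$; (ii) $\delta_k$ is locally nilpotent on $R_{k-1}$; (iii) for each $k$ there exist $h_k\in\mathcal H$ and $q_k\in{\mathbb K}^*$ not a root of unity such that $h_k$ acts on $R_{k-1}$ as $\sigma_k$ and $h_k\cdot x_k=q_kx_k$. The rank is $n=|\{k:\delta_k=0\}|$ and $\mathcal H=({\mathbb K}^* )^n$ is taken maximal. Homogeneous elements are the $\mathcal H$-eigenvectors. An element $u$ is normal if $uR=Ru$; a prime element is a nonzero normal $p$ with $pR$ a completely prime ideal. Goodearl–Yakimov elements: there is a surjective map $\mu:[1,N]\to[1,n]$ with predecessor $p(k)=\max\{j<k:\mu(j)=\mu(k)\}$ (or $-\infty$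 if none) and successor $s(k)=\min\{j>k:\mu(j)=\mu(k)\}$ (or $+\infty$ if none), and homogeneous elements $y_1,\ldots,y_N\in R$, uniquely determined, with $y_k=x_k$ if $p(k)=-\infty$ and $y_k=y_{p(k)}x_k-c_k$ for some $c_k\in R_{k-1}$ otherwise, such that for every $k$ the set $\{y_j: j\le k,\ s(j)>k\}$ is, up to nonzero scalars, the set of homogeneous prime elements of $R_k$. The $y_i$ pairwise quasi-commute. *)

theory Defs
  imports Main
begin

text \<open>
  The K-algebra R is
  a type 'r of class ring_1 (not necessarily commutative) together with a ring
  homomorphism sc : K \<Rightarrow> R whose image is central (the structure map).
  The generators are x 1, ..., x N.  R_k is the K-subalgebra generated by
  x 1, ..., x k (so R_0 is the image of K).
\<close>

definition K_algebra :: "('k::field_char_0 \<Rightarrow> 'r::ring_1) \<Rightarrow> bool" where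
  "K_algebra sc \<longleftrightarrow>
     (\<forall>a b. sc (a + b) = sc a + sc b) \<and> (\<forall>a b. sc (a * b) = sc a * sc b) \<and> sc 1 = 1 \<and>
     (\<forall>a r. sc a * r = r * sc a)"

inductive_set subalg :: "('k \<Rightarrow> 'r::ring_1) \<Rightarrow> (nat \<Rightarrow> 'r) \<Rightarrow> nat \<Rightarrow> 'r set"
  for sc :: "'k \<Rightarrow> 'r" and x :: "nat \<Rightarrow> 'r" and k :: nat where
  scal: "sc c \<in> subalg sc x k"
| gen: "1 \<le> i \<Longrightarrow> i \<le> k \<Longrightarrow> x i \<in> subalg sc x k"
| add: "a \<in> subalg sc x k \<Longrightarrow> b \<in> subalg sc x k \<Longrightarrow> a + b \<in> subalg sc x k"
| mult: "a \<in> subalg sc x k \<Longrightarrow> b \<in> subalg sc x k \<Longrightarrow> a * b \<in> subalg sc x k"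
| uminus: "a \<in> subalg sc x k \<Longrightarrow> - a \<in> subalg sc x k"

definition K_automorphism_on :: "('k \<Rightarrow> 'r::ring_1) \<Rightarrow> 'r set \<Rightarrow> ('r \<Rightarrow> 'r) \<Rightarrow> bool" where
  "K_automorphism_on sc S \<sigma> \<longleftrightarrow>
     bij_betw \<sigma> S S \<and>
     (\<forall>a\<in>S. \<forall>b\<in>S. \<sigma> (a + b) = \<sigma> a + \<sigma> b \<and> \<sigma> (a * b) = \<sigma> a * \<sigma> b) \<and>
     (\<forall>c. \<sigma> (sc c) = sc c)"

definition sigma_derivation_on :: "('k \<Rightarrow> 'r::ring_1) \<Rightarrow> 'r set \<Rightarrow> ('r \<Rightarrow> 'r) \<Rightarrow> ('r \<Rightarrow> 'r) \<Rightarrow> bool" where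
  "sigma_derivation_on sc S \<sigma> \<delta> \<longleftrightarrow>
     (\<forall>a\<in>S. \<delta> a \<in> S) \<and>
     (\<forall>a\<in>S. \<forall>b\<in>S. \<delta> (a + b) = \<delta> a + \<delta> b \<and> \<delta> (a * b) = \<sigma> a * \<delta> b + \<delta> a * b) \<and>
     (\<forall>c. \<forall>a\<in>S. \<delta> (sc c * a) = sc c * \<delta> a)"

text \<open>R is the iterated Ore extension K[x_1][x_2;sigma_2,delta_2]...[x_N;sigma_N,delta_N]:
  for every k, R_k is generated by R_(k-1) and x_k, x_k r = sigma_k(r) x_k + delta_k(r) for
  r in R_(k-1), and R_k is a free left R_(k-1)-module with basis 1, x_k, x_k^2, ...;
  finally R_N is all of R.  (For k = 1 we take sigma_1 = id, delta_1 = 0, i.e. R_1 = K[x_1].)\<close>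
definition iterated_Ore :: "('k::field_char_0 \<Rightarrow> 'r::ring_1) \<Rightarrow> (nat \<Rightarrow> 'r) \<Rightarrow> nat
      \<Rightarrow> (nat \<Rightarrow> 'r \<Rightarrow> 'r) \<Rightarrow> (nat \<Rightarrow> 'r \<Rightarrow> 'r) \<Rightarrow> bool" where
  "iterated_Ore sc x N \<sigma> \<delta> \<longleftrightarrow>
     K_algebra sc \<and> subalg sc x N = UNIV \<and>
     (\<forall>r\<in>subalg sc x 0. \<sigma> 1 r = r \<and> \<delta> 1 r = 0) \<and>
     (\<forall>k\<in>{1..N}.
        K_automorphism_on sc (subalg sc x (k - 1)) (\<sigma> k) \<and>
        sigma_derivation_on sc (subalg sc x (k - 1)) (\<sigma> k) (\<delta> k) \<and>
        (\<forall>r\<in>subalg sc x (k - 1). x k * r = \<sigma> k r * x k + \<delta> k r) \<and>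
        (\<forall>r\<in>subalg sc x k. \<exists>m a. (\<forall>i<m. a i \<in> subalg sc x (k - 1)) \<and>
                                    r = (\<Sum>i<m. a i * x k ^ i)) \<and>
        (\<forall>m a. (\<forall>i<m. a i \<in> subalg sc x (k - 1)) \<and> (\<Sum>i<m. a i * x k ^ i) = 0
                 \<longrightarrow> (\<forall>i<m. a i = 0)))"

text \<open>The torus H = (K^*)^n, represented by functions h with h l \<noteq> 0 for l in {1..n}
  and h l = 1 otherwise.\<close>
definition torus :: "nat \<Rightarrow> (nat \<Rightarrow> 'k::field) set" where
  "torus n = {h. (\<forall>l\<in>{1..n}. h l \<noteq> 0) \<and> (\<forall>l. l \<notin> {1..n} \<longrightarrow> h l = 1)}"

definition ore_rank :: "('k \<Rightarrow> 'r::ring_1) \<Rightarrow> (nat \<Rightarrow> 'r) \<Rightarrow> nat \<Rightarrow> (nat \<Rightarrow> 'r \<Rightarrow> 'r) \<Rightarrow> nat" where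
  "ore_rank sc x N \<delta> = card {k\<in>{1..N}. \<forall>r\<in>subalg sc x (k - 1). \<delta> k r = 0}"

text \<open>Since the x_i generate R and are eigenvectors, rationality of the
  action amounts to each eigen-character being a rational character of the torus, i.e.
  a Laurent monomial h \<mapsto> prod_l h_l^(w i l).\<close>
definition rational_torus_action ::
  "('k::field \<Rightarrow> 'r::ring_1) \<Rightarrow> (nat \<Rightarrow> 'r) \<Rightarrow> nat \<Rightarrow> nat \<Rightarrow> ((nat \<Rightarrow> 'k) \<Rightarrow> 'r \<Rightarrow> 'r) \<Rightarrow> bool" where
  "rational_torus_action sc x N n act \<longleftrightarrow>
     act (\<lambda>_. 1) = id \<and>
     (\<forall>h\<in>torus n. \<forall>h'\<in>torus n. act (\<lambda>l. h l * h' l) = act h \<circ> act h') \<and>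
     (\<forall>h\<in>torus n. K_automorphism_on sc UNIV (act h)) \<and>
     (\<exists>w :: nat \<Rightarrow> nat \<Rightarrow> int. \<forall>i\<in>{1..N}. \<forall>h\<in>torus n.
         act h (x i) = sc (\<Prod>l\<in>{1..n}. h l powi w i l) * x i)"

definition QNA :: "('k::field_char_0 \<Rightarrow> 'r::ring_1) \<Rightarrow> (nat \<Rightarrow> 'r) \<Rightarrow> nat
      \<Rightarrow> (nat \<Rightarrow> 'r \<Rightarrow> 'r) \<Rightarrow> (nat \<Rightarrow> 'r \<Rightarrow> 'r) \<Rightarrow> nat \<Rightarrow> ((nat \<Rightarrow> 'k) \<Rightarrow> 'r \<Rightarrow> 'r) \<Rightarrow> bool" where
  "QNA sc x N \<sigma> \<delta> n act \<longleftrightarrow>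
     iterated_Ore sc x N \<sigma> \<delta> \<and>
     n = ore_rank sc x N \<delta> \<and>
     rational_torus_action sc x N n act \<and>
     (\<forall>k\<in>{1..N}. \<forall>j\<in>{1..N}. j < k \<longrightarrow> (\<exists>lam. lam \<noteq> 0 \<and> \<sigma> k (x j) = sc lam * x j)) \<and>
     (\<forall>k\<in>{1..N}. \<forall>r\<in>subalg sc x (k - 1). \<exists>m. (\<delta> k ^^ m) r = 0) \<and>
     (\<forall>k\<in>{1..N}. \<exists>h\<in>torus n. \<exists>q. q \<noteq> 0 \<and> (\<forall>m>0. q ^ m \<noteq> 1) \<and>
         (\<forall>r\<in>subalg sc x (k - 1). act h r = \<sigma> k r) \<and> act h (x k) = sc q * x k)"

definition homogeneous :: "('k::field \<Rightarrow> 'r::ring_1) \<Rightarrow> nat \<Rightarrow> ((nat \<Rightarrow> 'k) \<Rightarrow> 'r \<Rightarrow> 'r) \<Rightarrow> 'r \<Rightarrow> bool" where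
  "homogeneous sc n act u \<longleftrightarrow> u \<noteq> 0 \<and> (\<forall>h\<in>torus n. \<exists>c. act h u = sc c * u)"

definition normal_in :: "'r::ring_1 set \<Rightarrow> 'r \<Rightarrow> bool" where
  "normal_in S u \<longleftrightarrow> u \<in> S \<and> {u * r | r. r \<in> S} = {r * u | r. r \<in> S}"

definition completely_prime_in :: "'r::ring_1 set \<Rightarrow> 'r set \<Rightarrow> bool" where
  "completely_prime_in S P \<longleftrightarrow> P \<subseteq> S \<and> P \<noteq> S \<and>
     (\<forall>a\<in>S. \<forall>b\<in>S. a * b \<in> P \<longrightarrow> a \<in> P \<or> b \<in> P)"

definition prime_elem_in :: "'r::ring_1 set \<Rightarrow> 'r \<Rightarrow> bool" where
  "prime_elem_in S p \<longleftrightarrow> p \<noteq> 0 \<and> normal_in S p \<and> completely_prime_in S {p * r | r. r \<in> S}"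

text \<open>Predecessor p(k) exists (p(k) \<noteq> -\<infinity>) and its value.\<close>
definition has_pred :: "(nat \<Rightarrow> nat) \<Rightarrow> nat \<Rightarrow> bool" where
  "has_pred \<mu> k \<longleftrightarrow> (\<exists>j. 1 \<le> j \<and> j < k \<and> \<mu> j = \<mu> k)"

definition pred_idx :: "(nat \<Rightarrow> nat) \<Rightarrow> nat \<Rightarrow> nat" where
  "pred_idx \<mu> k = Max {j. 1 \<le> j \<and> j < k \<and> \<mu> j = \<mu> k}"

text \<open>s(j) > k, i.e. there is no i with j < i \<le> k and \<mu> i = \<mu> j.\<close>
definition succ_gt :: "(nat \<Rightarrow> nat) \<Rightarrow> nat \<Rightarrow> nat \<Rightarrow> bool" where
  "succ_gt \<mu> j k \<longleftrightarrow> (\<forall>i. j < i \<and> i \<le> k \<longrightarrow> \<mu> i \<noteq> \<mu> j)"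

definition GY_elements :: "('k::field \<Rightarrow> 'r::ring_1) \<Rightarrow> (nat \<Rightarrow> 'r) \<Rightarrow> nat \<Rightarrow> nat
      \<Rightarrow> ((nat \<Rightarrow> 'k) \<Rightarrow> 'r \<Rightarrow> 'r) \<Rightarrow> (nat \<Rightarrow> nat) \<Rightarrow> (nat \<Rightarrow> 'r) \<Rightarrow> bool" where
  "GY_elements sc x N n act \<mu> y \<longleftrightarrow>
     \<mu> ` {1..N} = {1..n} \<and>
     (\<forall>k\<in>{1..N}. homogeneous sc n act (y k)) \<and>
     (\<forall>k\<in>{1..N}. \<not> has_pred \<mu> k \<longrightarrow> y k = x k) \<and>
     (\<forall>k\<in>{1..N}. has_pred \<mu> k \<longrightarrow>
         (\<exists>c\<in>subalg sc x (k - 1). y k = y (pred_idx \<mu> k) * x k - c)) \<and>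
     (\<forall>k\<in>{1..N}.
         (\<forall>j\<in>{1..k}. succ_gt \<mu> j k \<longrightarrow> prime_elem_in (subalg sc x k) (y j)) \<and>
         (\<forall>u. homogeneous sc n act u \<and> u \<in> subalg sc x k \<and> prime_elem_in (subalg sc x k) u \<longrightarrow>
              (\<exists>j\<in>{1..k}. succ_gt \<mu> j k \<and> (\<exists>c. c \<noteq> 0 \<and> u = sc c * y j))))"

end

theory Submission
  imports Defs
begin

text \<open>
  Each R_k = R_(k-1)[x_k; \<sigma>_k, \<delta>_k] is a free left R_(k-1)-module on the powers of x_k, so its
  nonzero elements have an x_k-degree, which is additive because \<sigma>_k is injective and R_(k-1) is
  a domain; hence every R_k is a domain, and a factorisation a = b r in R with a, b in R_k can
  be replaced by one with r in R_k.  The element y_k has x_k-degree 1 over R_(k-1).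
  If i < j, then y_i has x_j-degree 0, whereas y_j r has x_j-degree at least 1.
  If j < i, primality of y_i in R_i puts the cofactor r into y_i R_i = R_i y_i, and cancelling
  y_i makes y_j right invertible in R_j, which a prime element is not.
\<close>

definition deg_lt :: "'r::ring_1 set \<Rightarrow> 'r \<Rightarrow> nat \<Rightarrow> 'r \<Rightarrow> bool" where
  "deg_lt S X n u \<longleftrightarrow> (\<exists>c. (\<forall>i<n. c i \<in> S) \<and> u = (\<Sum>i<n. c i * X ^ i))"

definition deg_eq :: "'r::ring_1 set \<Rightarrow> 'r \<Rightarrow> nat \<Rightarrow> 'r \<Rightarrow> bool" where
  "deg_eq S X d u \<longleftrightarrow> (\<exists>w v. w \<in> S \<and> w \<noteq> 0 \<and> deg_lt S X d v \<and> u = w * X ^ d + v)"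

locale ore_extension =
  fixes S :: "'r::ring_1 set" and X :: 'r and \<sigma> \<delta> :: "'r \<Rightarrow> 'r"
  assumes zero_mem: "0 \<in> S" and one_mem: "1 \<in> S"
    and add_mem: "a \<in> S \<Longrightarrow> b \<in> S \<Longrightarrow> a + b \<in> S"
    and mult_mem: "a \<in> S \<Longrightarrow> b \<in> S \<Longrightarrow> a * b \<in> S"
    and uminus_mem: "a \<in> S \<Longrightarrow> - a \<in> S"
    and \<sigma>_mem: "s \<in> S \<Longrightarrow> \<sigma> s \<in> S"
    and \<sigma>_eq_0: "s \<in> S \<Longrightarrow> \<sigma> s = 0 \<Longrightarrow> s = 0"
    and \<delta>_mem: "s \<in> S \<Longrightarrow> \<delta> s \<in> S"
    and X_mult: "s \<in> S \<Longrightarrow> X * s = \<sigma> s * X + \<delta> s"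
    and free: "\<forall>i<m. c i \<in> S \<Longrightarrow> (\<Sum>i<m. c i * X ^ i) = 0 \<Longrightarrow> i < m \<Longrightarrow> c i = 0"
begin

lemma diff_mem: "a \<in> S \<Longrightarrow> b \<in> S \<Longrightarrow> a - b \<in> S"
  using add_mem[of a "- b"] uminus_mem[of b] by simp

lemma deg_ltE:
  assumes "deg_lt S X n u"
  obtains c where "\<forall>i<n. c i \<in> S" "u = (\<Sum>i<n. c i * X ^ i)"
  using assms deg_lt_def by blast

lemma deg_lt_0: "deg_lt S X n 0"
  unfolding deg_lt_def by (rule exI[of _ "\<lambda>_. 0"]) (simp add: zero_mem)

lemma deg_lt_mono:
  assumes "deg_lt S X n u" "n \<le> m"
  shows "deg_lt S X m u"
proof -
  obtain c where c: "\<forall>i<n. c i \<in> S" "u = (\<Sum>i<n. c i * X ^ i)"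
    using assms(1) by (rule deg_ltE)
  define c' where "c' i = (if i < n then c i else 0)" for i
  have "(\<Sum>i<m. c' i * X ^ i) = (\<Sum>i<n. c' i * X ^ i)"
    by (rule sum.mono_neutral_right) (use assms(2) in \<open>auto simp: c'_def\<close>)
  also have "\<dots> = u" using c by (simp add: c'_def)
  finally show ?thesis
    unfolding deg_lt_def using c zero_mem by (intro exI[of _ c']) (auto simp: c'_def)
qed

lemma deg_lt_add: "deg_lt S X n u \<Longrightarrow> deg_lt S X n v \<Longrightarrow> deg_lt S X n (u + v)"
  unfolding deg_lt_def
  by (elim exE conjE, rename_tac c d, rule_tac x = "\<lambda>i. c i + d i" in exI)
    (simp add: add_mem sum.distrib distrib_right)

lemma deg_lt_sum: "\<forall>i<(m::nat). deg_lt S X n (f i) \<Longrightarrow> deg_lt S X n (\<Sum>i<m. f i)"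
  by (induction m) (auto simp: deg_lt_0 deg_lt_add)

lemma deg_lt_monom:
  assumes "s \<in> S" "i < n"
  shows "deg_lt S X n (s * X ^ i)"
proof -
  have "(\<Sum>l<n. (if l = i then s else 0) * X ^ l) = (\<Sum>l<n. if l = i then s * X ^ i else 0)"
    by (rule sum.cong) auto
  also have "\<dots> = s * X ^ i" using assms(2) by simp
  finally show ?thesis
    unfolding deg_lt_def using assms zero_mem by (intro exI[of _ "\<lambda>l. if l = i then s else 0"]) auto
qed

lemma deg_lt_mult_left:
  assumes "s \<in> S" "deg_lt S X n u"
  shows "deg_lt S X n (s * u)"
proof -
  obtain c where c: "\<forall>i<n. c i \<in> S" "u = (\<Sum>i<n. c i * X ^ i)"
    using assms(2) by (rule deg_ltE)
  have "s * u = (\<Sum>i<n. (s * c i) * X ^ i)" by (simp add: c sum_distrib_left mult.assoc)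
  also have "deg_lt S X n \<dots>" using c assms(1) by (intro deg_lt_sum allI impI deg_lt_monom mult_mem) auto
  finally show ?thesis .
qed

lemma X_mult_deg_lt:
  assumes "deg_lt S X n u"
  shows "deg_lt S X (Suc n) (X * u)"
proof -
  obtain c where c: "\<forall>i<n. c i \<in> S" "u = (\<Sum>i<n. c i * X ^ i)"
    using assms by (rule deg_ltE)
  have "X * u = (\<Sum>i<n. \<sigma> (c i) * X ^ Suc i + \<delta> (c i) * X ^ i)"
    unfolding c sum_distrib_left
    by (rule sum.cong) (use c X_mult in \<open>auto simp: distrib_right mult.assoc[symmetric]\<close>)
  also have "deg_lt S X (Suc n) \<dots>"
    using c by (intro deg_lt_sum allI impI deg_lt_add deg_lt_monom \<sigma>_mem \<delta>_mem) auto
  finally show ?thesis .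
qed

lemma X_power_mult_deg_lt: "deg_lt S X n u \<Longrightarrow> deg_lt S X (d + n) (X ^ d * u)"
proof (induction d)
  case (Suc d)
  hence "deg_lt S X (Suc (d + n)) (X * (X ^ d * u))" by (intro X_mult_deg_lt) auto
  thus ?case by (simp add: mult.assoc)
qed simp

lemma deg_lt_mult_X_power:
  assumes "deg_lt S X n u"
  shows "deg_lt S X (n + e) (u * X ^ e)"
proof -
  obtain c where c: "\<forall>i<n. c i \<in> S" "u = (\<Sum>i<n. c i * X ^ i)"
    using assms by (rule deg_ltE)
  have "u * X ^ e = (\<Sum>i<n. c i * X ^ (i + e))"
    by (simp add: c sum_distrib_right mult.assoc power_add)
  also have "deg_lt S X (n + e) \<dots>" using c by (intro deg_lt_sum allI impI deg_lt_monom) auto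
  finally show ?thesis .
qed

lemma \<sigma>_power_mem: "s \<in> S \<Longrightarrow> (\<sigma> ^^ d) s \<in> S"
  by (induction d) (auto simp: \<sigma>_mem)

lemma \<sigma>_power_nonzero: "s \<in> S \<Longrightarrow> s \<noteq> 0 \<Longrightarrow> (\<sigma> ^^ d) s \<noteq> 0"
  by (induction d) (auto dest: \<sigma>_eq_0 \<sigma>_power_mem)

lemma X_power_mult:
  assumes "s \<in> S"
  shows "\<exists>v. deg_lt S X d v \<and> X ^ d * s = (\<sigma> ^^ d) s * X ^ d + v"
proof (induction d)
  case 0
  show ?case using deg_lt_0 by auto
next
  case (Suc d)
  then obtain v where v: "deg_lt S X d v" "X ^ d * s = (\<sigma> ^^ d) s * X ^ d + v"
    by blast
  define t where "t = (\<sigma> ^^ d) s"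
  have t: "t \<in> S" using \<sigma>_power_mem assms t_def by simp
  have "X ^ Suc d * s = (X * t) * X ^ d + X * v"
    using v t_def by (simp add: distrib_left mult.assoc)
  also have "\<dots> = \<sigma> t * X ^ Suc d + (\<delta> t * X ^ d + X * v)"
    using X_mult[OF t] by (simp add: distrib_right mult.assoc)
  finally have "X ^ Suc d * s = (\<sigma> ^^ Suc d) s * X ^ Suc d + (\<delta> t * X ^ d + X * v)"
    by (simp add: t_def)
  moreover have "deg_lt S X (Suc d) (\<delta> t * X ^ d + X * v)"
    using t v by (intro deg_lt_add deg_lt_monom \<delta>_mem X_mult_deg_lt) auto
  ultimately show ?case by blast
qed

lemma deg_lt_mult_right:
  assumes "deg_lt S X n u" "s \<in> S"
  shows "deg_lt S X n (u * s)"
proof -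
  obtain c where c: "\<forall>i<n. c i \<in> S" "u = (\<Sum>i<n. c i * X ^ i)"
    using assms(1) by (rule deg_ltE)
  have "u * s = (\<Sum>i<n. c i * (X ^ i * s))" by (simp add: c sum_distrib_right mult.assoc)
  also have "deg_lt S X n \<dots>"
  proof (intro deg_lt_sum allI impI)
    fix i assume i: "i < n"
    obtain v where v: "deg_lt S X i v" "X ^ i * s = (\<sigma> ^^ i) s * X ^ i + v"
      using X_power_mult assms(2) by blast
    have "c i * (X ^ i * s) = (c i * (\<sigma> ^^ i) s) * X ^ i + c i * v"
      by (simp add: v distrib_left mult.assoc)
    moreover have "deg_lt S X n (c i * (\<sigma> ^^ i) s * X ^ i)"
      using i c assms(2) by (intro deg_lt_monom mult_mem \<sigma>_power_mem) auto
    moreover have "deg_lt S X n (c i * v)"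
      using i c v deg_lt_mult_left deg_lt_mono[of i "c i * v" n] by simp
    ultimately show "deg_lt S X n (c i * (X ^ i * s))"
      by (simp add: deg_lt_add)
  qed
  finally show ?thesis .
qed

lemma deg_lt_mult:
  assumes "deg_lt S X n u" "deg_lt S X m v"
  shows "deg_lt S X (n + m) (u * v)"
proof -
  obtain c where c: "\<forall>i<n. c i \<in> S" "u = (\<Sum>i<n. c i * X ^ i)"
    using assms(1) by (rule deg_ltE)
  have "u * v = (\<Sum>i<n. c i * (X ^ i * v))" by (simp add: c sum_distrib_right mult.assoc)
  also have "deg_lt S X (n + m) \<dots>"
  proof (intro deg_lt_sum allI impI)
    fix i assume i: "i < n"
    have "deg_lt S X (i + m) (c i * (X ^ i * v))"
      using c i assms(2) by (intro deg_lt_mult_left X_power_mult_deg_lt) auto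
    thus "deg_lt S X (n + m) (c i * (X ^ i * v))" using deg_lt_mono i by simp
  qed
  finally show ?thesis .
qed

lemma deg_eq_not_deg_lt:
  assumes "deg_eq S X d u"
  shows "\<not> deg_lt S X d u"
proof
  assume "deg_lt S X d u"
  then obtain c where c: "\<forall>i<d. c i \<in> S" "u = (\<Sum>i<d. c i * X ^ i)"
    by (rule deg_ltE)
  obtain w v where wv: "w \<in> S" "w \<noteq> 0" "deg_lt S X d v" "u = w * X ^ d + v"
    using assms deg_eq_def by blast
  obtain b where b: "\<forall>i<d. b i \<in> S" "v = (\<Sum>i<d. b i * X ^ i)"
    using wv(3) by (rule deg_ltE)
  define a where "a i = (if i = d then w else b i - c i)" for i
  have "(\<Sum>i<Suc d. a i * X ^ i) = w * X ^ d + v - u"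
    by (simp add: a_def b c sum_subtractf left_diff_distrib)
  also have "\<dots> = 0" using wv by simp
  moreover have "\<forall>i<Suc d. a i \<in> S" using wv b c by (auto simp: a_def intro: diff_mem)
  ultimately have "a d = 0" using free[of "Suc d" a d] by auto
  thus False using wv by (simp add: a_def)
qed

lemma deg_eq_nonzero: "deg_eq S X d u \<Longrightarrow> u \<noteq> 0"
  using deg_eq_not_deg_lt deg_lt_0 by blast

lemma deg_eq_imp_deg_lt:
  assumes "deg_eq S X d u" "d < e"
  shows "deg_lt S X e u"
proof -
  obtain w v where "w \<in> S" "deg_lt S X d v" "u = w * X ^ d + v"
    using assms(1) deg_eq_def by blast
  with assms(2) show ?thesis by (simp add: deg_lt_add deg_lt_monom deg_lt_mono[of d v e])
qed

lemma deg_eq_unique: "deg_eq S X d u \<Longrightarrow> deg_eq S X e u \<Longrightarrow> d = e"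
  using deg_eq_imp_deg_lt deg_eq_not_deg_lt by (metis linorder_neqE_nat)

lemma deg_eq_0: "s \<in> S \<Longrightarrow> s \<noteq> 0 \<Longrightarrow> deg_eq S X 0 s"
  unfolding deg_eq_def using deg_lt_0 by force

lemma deg_eq_exists: "deg_lt S X m u \<Longrightarrow> u \<noteq> 0 \<Longrightarrow> \<exists>d. deg_eq S X d u"
proof (induction m arbitrary: u)
  case 0
  thus ?case by (auto simp: deg_lt_def)
next
  case (Suc m)
  obtain c where c: "\<forall>i<Suc m. c i \<in> S" "u = (\<Sum>i<Suc m. c i * X ^ i)"
    using Suc.prems(1) by (rule deg_ltE)
  have u: "u = c m * X ^ m + (\<Sum>i<m. c i * X ^ i)" using c by (simp add: add.commute)
  have lower: "deg_lt S X m (\<Sum>i<m. c i * X ^ i)"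
    unfolding deg_lt_def using c by (intro exI[of _ c]) auto
  show ?case
  proof (cases "c m = 0")
    case True
    thus ?thesis using Suc.IH[OF _ Suc.prems(2)] u lower by simp
  next
    case False
    thus ?thesis unfolding deg_eq_def using u lower c by blast
  qed
qed

lemma deg_eq_mult:
  assumes no_zero_divisors: "\<forall>a\<in>S. \<forall>b\<in>S. a * b = 0 \<longrightarrow> a = 0 \<or> b = 0"
    and "deg_eq S X d u" "deg_eq S X e u'"
  shows "deg_eq S X (d + e) (u * u')"
proof -
  obtain w v where wv: "w \<in> S" "w \<noteq> 0" "deg_lt S X d v" "u = w * X ^ d + v"
    using assms(2) deg_eq_def by blast
  obtain w' v' where wv': "w' \<in> S" "w' \<noteq> 0" "deg_lt S X e v'" "u' = w' * X ^ e + v'"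
    using assms(3) deg_eq_def by blast
  obtain z where z: "deg_lt S X d z" "X ^ d * w' = (\<sigma> ^^ d) w' * X ^ d + z"
    using X_power_mult wv'(1) by blast
  have "u * u' = w * (X ^ d * w') * X ^ e + w * (X ^ d * v') + v * w' * X ^ e + v * v'"
    by (simp add: wv wv' distrib_left distrib_right mult.assoc)
  also have "\<dots> = (w * (\<sigma> ^^ d) w') * X ^ (d + e) +
      (w * z * X ^ e + w * (X ^ d * v') + v * w' * X ^ e + v * v')"
    by (simp add: z distrib_left distrib_right mult.assoc power_add add.assoc)
  finally have "u * u' = (w * (\<sigma> ^^ d) w') * X ^ (d + e) +
      (w * z * X ^ e + w * (X ^ d * v') + v * w' * X ^ e + v * v')" .
  moreover have "w * (\<sigma> ^^ d) w' \<in> S" using wv wv' by (intro mult_mem \<sigma>_power_mem)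
  moreover have "w * (\<sigma> ^^ d) w' \<noteq> 0"
    using no_zero_divisors wv wv' \<sigma>_power_mem \<sigma>_power_nonzero by blast
  moreover have "deg_lt S X (d + e) (w * z * X ^ e + w * (X ^ d * v') + v * w' * X ^ e + v * v')"
  proof (intro deg_lt_add)
    show "deg_lt S X (d + e) (w * z * X ^ e)"
      using wv(1) z(1) by (intro deg_lt_mult_X_power deg_lt_mult_left)
    show "deg_lt S X (d + e) (w * (X ^ d * v'))"
      using wv(1) wv'(3) by (intro deg_lt_mult_left X_power_mult_deg_lt)
    show "deg_lt S X (d + e) (v * w' * X ^ e)"
      using wv(3) wv'(1) by (intro deg_lt_mult_X_power deg_lt_mult_right)
    show "deg_lt S X (d + e) (v * v')"
      using wv(3) wv'(3) by (rule deg_lt_mult)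
  qed
  ultimately show ?thesis unfolding deg_eq_def by blast
qed

text \<open>Since the powers of X form a left S-basis, comparing constant coefficients in
  a = b * r = \<Sum> (b * c i) * X^i shows that a = b * c 0.\<close>
lemma left_multiple_in_base:
  assumes "a \<in> S" "b \<in> S" "deg_lt S X m r" "a = b * r"
  shows "\<exists>r'\<in>S. a = b * r'"
proof -
  obtain c where c: "\<forall>i<m. c i \<in> S" "r = (\<Sum>i<m. c i * X ^ i)"
    using assms(3) by (rule deg_ltE)
  show ?thesis
  proof (cases m)
    case 0
    thus ?thesis using c assms zero_mem by (auto intro!: bexI[of _ 0])
  next
    case (Suc m')
    define e where "e i = b * c i - (if i = 0 then a else 0)" for i
    have "(\<Sum>i<m. (if i = 0 then a else 0) * X ^ i) = (\<Sum>i<m. if i = 0 then a else 0)"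
      by (rule sum.cong) auto
    also have "\<dots> = a" using Suc by simp
    finally have "(\<Sum>i<m. e i * X ^ i) = b * r - a"
      by (simp add: e_def c sum_subtractf left_diff_distrib sum_distrib_left mult.assoc)
    also have "\<dots> = 0" using assms by simp
    finally have "(\<Sum>i<m. e i * X ^ i) = 0" .
    moreover have "\<forall>i<m. e i \<in> S"
      using c assms zero_mem by (auto simp: e_def intro!: diff_mem mult_mem)
    ultimately have "e 0 = 0" using free[of m e 0] Suc by simp
    thus ?thesis using c Suc by (auto simp: e_def)
  qed
qed

end

lemma
  assumes "K_algebra sc"
  shows K_algebra_add: "sc (a + b) = sc a + sc b"
    and K_algebra_mult: "sc (a * b) = sc a * sc b"
    and K_algebra_one: "sc 1 = 1"
  using assms unfolding K_algebra_def by blast+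

lemma K_algebra_zero: "K_algebra sc \<Longrightarrow> sc 0 = 0"
  using K_algebra_add[of sc 0 0] by simp

lemma K_algebra_uminus: "K_algebra sc \<Longrightarrow> sc (- a) = - sc a"
  using K_algebra_add[of sc "- a" a] K_algebra_zero[of sc] by (simp add: eq_neg_iff_add_eq_0)

lemma K_algebra_nonzero:
  assumes "K_algebra sc" "c \<noteq> 0"
  shows "sc c \<noteq> 0"
  using K_algebra_mult[OF assms(1), of c "inverse c"] K_algebra_one[OF assms(1)] assms(2) by auto

lemma subalg_mono: "u \<in> subalg sc x k \<Longrightarrow> k \<le> k' \<Longrightarrow> u \<in> subalg sc x k'"
  by (induction rule: subalg.induct) (auto intro: subalg.intros)

lemma subalg_one: "K_algebra sc \<Longrightarrow> 1 \<in> subalg sc x k"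
  using subalg.scal[of sc 1] K_algebra_one by metis

lemma subalg_0_eq_scalar:
  assumes "K_algebra sc" "u \<in> subalg sc x 0"
  shows "\<exists>c. u = sc c"
  using assms(2)
  by (induction rule: subalg.induct)
    (auto simp flip: K_algebra_add[OF assms(1)] K_algebra_mult[OF assms(1)]
      K_algebra_uminus[OF assms(1)])

lemma subalg_0_no_zero_divisors:
  assumes "K_algebra sc" "a \<in> subalg sc x 0" "b \<in> subalg sc x 0" "a * b = 0"
  shows "a = 0 \<or> b = 0"
proof -
  obtain c d where "a = sc c" "b = sc d"
    using subalg_0_eq_scalar[OF assms(1)] assms(2,3) by metis
  hence "sc (c * d) = 0" using assms K_algebra_mult by metis
  hence "c = 0 \<or> d = 0" using K_algebra_nonzero[OF assms(1), of "c * d"] by auto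
  thus ?thesis using \<open>a = sc c\<close> \<open>b = sc d\<close> K_algebra_zero[OF assms(1)] by auto
qed

lemma iterated_Ore_K_algebra: "iterated_Ore sc x N \<sigma> \<delta> \<Longrightarrow> K_algebra sc"
  unfolding iterated_Ore_def by (elim conjE)

lemma iterated_Ore_UNIV: "iterated_Ore sc x N \<sigma> \<delta> \<Longrightarrow> subalg sc x N = UNIV"
  unfolding iterated_Ore_def by (elim conjE)

lemma iterated_Ore_ore_extension:
  assumes io: "iterated_Ore sc x N \<sigma> \<delta>" and k: "k \<in> {1..N}"
  shows "ore_extension (subalg sc x (k - 1)) (x k) (\<sigma> k) (\<delta> k)"
proof -
  let ?S = "subalg sc x (k - 1)"
  have ka: "K_algebra sc" using io by (rule iterated_Ore_K_algebra)
  have aut: "K_automorphism_on sc ?S (\<sigma> k)"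
    and der: "sigma_derivation_on sc ?S (\<sigma> k) (\<delta> k)"
    and comm: "\<forall>r\<in>?S. x k * r = \<sigma> k r * x k + \<delta> k r"
    and free: "\<forall>m a. (\<forall>i<m. a i \<in> ?S) \<and> (\<Sum>i<m. a i * x k ^ i) = 0 \<longrightarrow> (\<forall>i<m. a i = 0)"
    using bspec[OF io[unfolded iterated_Ore_def, THEN conjunct2, THEN conjunct2, THEN conjunct2] k]
    by blast+
  have zero: "0 \<in> ?S" using subalg.scal[of sc 0] K_algebra_zero[OF ka] by metis
  have bij: "bij_betw (\<sigma> k) ?S ?S" using aut unfolding K_automorphism_on_def by blast
  have "\<sigma> k (0 + 0) = \<sigma> k 0 + \<sigma> k 0"
    using aut zero unfolding K_automorphism_on_def by blast
  hence "\<sigma> k 0 = 0" by simp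
  hence \<sigma>_eq_0: "s \<in> ?S \<Longrightarrow> \<sigma> k s = 0 \<Longrightarrow> s = 0" for s
    using inj_onD[OF bij_betw_imp_inj_on[OF bij], of s 0] zero by simp
  show ?thesis
  proof
    show "0 \<in> ?S" "1 \<in> ?S" using zero subalg_one[OF ka] .
    show "\<And>a b. a \<in> ?S \<Longrightarrow> b \<in> ?S \<Longrightarrow> a + b \<in> ?S" by (rule subalg.add)
    show "\<And>a b. a \<in> ?S \<Longrightarrow> b \<in> ?S \<Longrightarrow> a * b \<in> ?S" by (rule subalg.mult)
    show "\<And>a. a \<in> ?S \<Longrightarrow> - a \<in> ?S" by (rule subalg.uminus)
    show "\<And>s. s \<in> ?S \<Longrightarrow> \<sigma> k s \<in> ?S" using bij bij_betwE by blast
    show "\<And>s. s \<in> ?S \<Longrightarrow> \<sigma> k s = 0 \<Longrightarrow> s = 0" by (rule \<sigma>_eq_0)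
    show "\<And>s. s \<in> ?S \<Longrightarrow> \<delta> k s \<in> ?S" using der unfolding sigma_derivation_on_def by blast
    show "\<And>s. s \<in> ?S \<Longrightarrow> x k * s = \<sigma> k s * x k + \<delta> k s" using comm by blast
    show "\<And>m c i. \<forall>i<m. c i \<in> ?S \<Longrightarrow> (\<Sum>i<m. c i * x k ^ i) = 0 \<Longrightarrow> i < m \<Longrightarrow> c i = 0"
      using free by blast
  qed
qed

lemma iterated_Ore_deg_lt:
  assumes "iterated_Ore sc x N \<sigma> \<delta>" "k \<in> {1..N}" "u \<in> subalg sc x k"
  shows "\<exists>m. deg_lt (subalg sc x (k - 1)) (x k) m u"
  using assms unfolding iterated_Ore_def deg_lt_def by blast

lemma iterated_Ore_no_zero_divisors:
  assumes io: "iterated_Ore sc x N \<sigma> \<delta>"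
  shows "k \<le> N \<Longrightarrow> \<forall>a\<in>subalg sc x k. \<forall>b\<in>subalg sc x k. a * b = 0 \<longrightarrow> a = 0 \<or> b = 0"
proof (induction k)
  case 0
  show ?case using subalg_0_no_zero_divisors[OF iterated_Ore_K_algebra[OF io]] by blast
next
  case (Suc k)
  have k: "Suc k \<in> {1..N}" using Suc.prems by simp
  interpret ore_extension "subalg sc x k" "x (Suc k)" "\<sigma> (Suc k)" "\<delta> (Suc k)"
    using iterated_Ore_ore_extension[OF io k] by simp
  have "a * b \<noteq> 0" if a: "a \<in> subalg sc x (Suc k)" "a \<noteq> 0" and b: "b \<in> subalg sc x (Suc k)" "b \<noteq> 0"
    for a b
  proof -
    obtain d where d: "deg_eq (subalg sc x k) (x (Suc k)) d a"
      using iterated_Ore_deg_lt[OF io k a(1)] deg_eq_exists a(2) by auto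
    obtain e where e: "deg_eq (subalg sc x k) (x (Suc k)) e b"
      using iterated_Ore_deg_lt[OF io k b(1)] deg_eq_exists b(2) by auto
    show ?thesis using deg_eq_mult[OF Suc.IH d e] Suc.prems deg_eq_nonzero by simp
  qed
  thus ?case by blast
qed

lemma iterated_Ore_left_multiple:
  assumes io: "iterated_Ore sc x N \<sigma> \<delta>" and "k \<le> N"
    and a: "a \<in> subalg sc x k" and b: "b \<in> subalg sc x k" and "a = b * r"
  shows "\<exists>r'\<in>subalg sc x k. a = b * r'"
proof -
  have "r \<in> subalg sc x m \<Longrightarrow> k \<le> m \<Longrightarrow> m \<le> N \<Longrightarrow> a = b * r \<Longrightarrow> \<exists>r'\<in>subalg sc x k. a = b * r'"
    for m r
  proof (induction m arbitrary: r)
    case 0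
    thus ?case by auto
  next
    case (Suc m)
    show ?case
    proof (cases "k = Suc m")
      case True
      thus ?thesis using Suc.prems by blast
    next
      case False
      have m: "Suc m \<in> {1..N}" using Suc.prems by simp
      interpret ore_extension "subalg sc x m" "x (Suc m)" "\<sigma> (Suc m)" "\<delta> (Suc m)"
        using iterated_Ore_ore_extension[OF io m] by simp
      obtain n where "deg_lt (subalg sc x m) (x (Suc m)) n r"
        using iterated_Ore_deg_lt[OF io m Suc.prems(1)] by auto
      moreover have "a \<in> subalg sc x m" "b \<in> subalg sc x m"
        using a b False Suc.prems(2) by (auto intro: subalg_mono)
      ultimately obtain r' where "r' \<in> subalg sc x m" "a = b * r'"
        using left_multiple_in_base Suc.prems(4) by blast
      thus ?thesis using Suc.IH False Suc.prems(2,3) by simp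
    qed
  qed
  thus ?thesis using iterated_Ore_UNIV[OF io] assms by blast
qed

lemma prime_elem_in_not_right_invertible:
  assumes "prime_elem_in S p" and mult_mem: "\<And>a b. a \<in> S \<Longrightarrow> b \<in> S \<Longrightarrow> a * b \<in> S"
    and "t \<in> S" "p * t = 1"
  shows False
proof -
  have p: "p \<in> S" and proper: "{p * r | r. r \<in> S} \<noteq> S"
    using assms(1) unfolding prime_elem_in_def normal_in_def completely_prime_in_def by blast+
  have "s \<in> {p * r | r. r \<in> S}" if "s \<in> S" for s
    using assms(3,4) that mult_mem by (metis (mono_tags, lifting) mem_Collect_eq mult.assoc mult_1)
  moreover have "{p * r | r. r \<in> S} \<subseteq> S" using p mult_mem by blast
  ultimately show False using proper by blast
qed

lemma prime_elem_inD:
  assumes "prime_elem_in S p" "a \<in> S" "b \<in> S" "a * b \<in> {p * r | r. r \<in> S}"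
  shows "a \<in> {p * r | r. r \<in> S} \<or> b \<in> {p * r | r. r \<in> S}"
proof -
  have "\<forall>a\<in>S. \<forall>b\<in>S. a * b \<in> {p * r | r. r \<in> S} \<longrightarrow>
      a \<in> {p * r | r. r \<in> S} \<or> b \<in> {p * r | r. r \<in> S}"
    using assms(1) unfolding prime_elem_in_def completely_prime_in_def by (elim conjE)
  thus ?thesis using assms(2-4) by blast
qed

lemma prime_elem_in_normal:
  "prime_elem_in S p \<Longrightarrow> {p * r | r. r \<in> S} = {r * p | r. r \<in> S}"
  unfolding prime_elem_in_def normal_in_def by (elim conjE)

lemma GY_prime:
  assumes "GY_elements sc x N n act \<mu> y" "k \<in> {1..N}"
  shows "prime_elem_in (subalg sc x k) (y k)"
proof -
  have "succ_gt \<mu> k k" unfolding succ_gt_def by auto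
  with assms show ?thesis unfolding GY_elements_def by auto
qed

lemma GY_mem: "GY_elements sc x N n act \<mu> y \<Longrightarrow> k \<in> {1..N} \<Longrightarrow> y k \<in> subalg sc x k"
  using GY_prime unfolding prime_elem_in_def normal_in_def by blast

lemma GY_nonzero: "GY_elements sc x N n act \<mu> y \<Longrightarrow> k \<in> {1..N} \<Longrightarrow> y k \<noteq> 0"
  using GY_prime unfolding prime_elem_in_def by blast

lemma GY_deg_eq_1:
  assumes "iterated_Ore sc x N \<sigma> \<delta>" and gy: "GY_elements sc x N n act \<mu> y" and k: "k \<in> {1..N}"
  shows "deg_eq (subalg sc x (k - 1)) (x k) 1 (y k)"
proof -
  interpret ore_extension "subalg sc x (k - 1)" "x k" "\<sigma> k" "\<delta> k"
    using iterated_Ore_ore_extension assms(1) k .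
  show ?thesis
  proof (cases "has_pred \<mu> k")
    case False
    hence "y k = 1 * x k ^ 1 + 0" using gy k unfolding GY_elements_def by simp
    thus ?thesis unfolding deg_eq_def using one_mem deg_lt_0 by fastforce
  next
    case True
    then obtain c where c: "c \<in> subalg sc x (k - 1)" "y k = y (pred_idx \<mu> k) * x k - c"
      using gy k unfolding GY_elements_def by blast
    have "finite {j. 1 \<le> j \<and> j < k \<and> \<mu> j = \<mu> k}" by (rule finite_subset[of _ "{..<k}"]) auto
    hence "pred_idx \<mu> k \<in> {j. 1 \<le> j \<and> j < k \<and> \<mu> j = \<mu> k}"
      using True unfolding pred_idx_def has_pred_def by (intro Max_in) auto
    hence p: "pred_idx \<mu> k \<in> {1..N}" "pred_idx \<mu> k \<le> k - 1" using k by auto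
    have "y (pred_idx \<mu> k) \<in> subalg sc x (k - 1)" "y (pred_idx \<mu> k) \<noteq> 0"
      using GY_mem[OF gy p(1)] GY_nonzero[OF gy p(1)] subalg_mono p(2) by blast+
    moreover have "y k = y (pred_idx \<mu> k) * x k ^ 1 + (- c * x k ^ 0)" using c by simp
    moreover have "deg_lt (subalg sc x (k - 1)) (x k) 1 (- c * x k ^ 0)"
      using c by (intro deg_lt_monom uminus_mem) auto
    ultimately show ?thesis unfolding deg_eq_def by blast
  qed
qed

lemma GY_not_left_multiple_of_later:
  assumes q: "QNA sc x N \<sigma> \<delta> n act" and gy: "GY_elements sc x N n act \<mu> y"
    and a: "a \<in> {1..N}" and b: "b \<in> {1..N}" and "a < b"
  shows "y a \<noteq> y b * r"
proof
  assume eq: "y a = y b * r"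
  have io: "iterated_Ore sc x N \<sigma> \<delta>" using q unfolding QNA_def by (elim conjE)
  interpret ore_extension "subalg sc x (b - 1)" "x b" "\<sigma> b" "\<delta> b"
    using iterated_Ore_ore_extension[OF io b] .
  have ya: "y a \<in> subalg sc x (b - 1)" "y a \<noteq> 0"
    using GY_mem[OF gy a] GY_nonzero[OF gy a] \<open>a < b\<close> subalg_mono[of "y a" sc x a "b - 1"] by auto
  obtain r' where r': "r' \<in> subalg sc x b" "y a = y b * r'"
    using iterated_Ore_left_multiple[OF io _ subalg_mono[OF ya(1)] GY_mem[OF gy b] eq] b by auto
  obtain m where "deg_lt (subalg sc x (b - 1)) (x b) m r'"
    using iterated_Ore_deg_lt[OF io b r'(1)] by auto
  moreover have "r' \<noteq> 0" using r' ya by auto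
  ultimately obtain e where e: "deg_eq (subalg sc x (b - 1)) (x b) e r'"
    using deg_eq_exists by blast
  have "b - 1 \<le> N" using b by auto
  hence "deg_eq (subalg sc x (b - 1)) (x b) (1 + e) (y a)"
    using deg_eq_mult[OF iterated_Ore_no_zero_divisors[OF io] GY_deg_eq_1[OF io gy b] e] r'
    by simp
  moreover have "deg_eq (subalg sc x (b - 1)) (x b) 0 (y a)" using deg_eq_0 ya by blast
  ultimately show False using deg_eq_unique by fastforce
qed

lemma GY_not_left_multiple_of_earlier:
  assumes q: "QNA sc x N \<sigma> \<delta> n act" and gy: "GY_elements sc x N n act \<mu> y"
    and i: "i \<in> {1..N}" and j: "j \<in> {1..N}" and "j < i"
  shows "y i \<noteq> y j * r"
proof
  assume eq: "y i = y j * r"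
  have io: "iterated_Ore sc x N \<sigma> \<delta>" using q unfolding QNA_def by (elim conjE)
  have ka: "K_algebra sc" using io by (rule iterated_Ore_K_algebra)
  let ?Ri = "subalg sc x i"
  have prime_i: "prime_elem_in ?Ri (y i)" using GY_prime[OF gy i] .
  have yj: "y j \<in> ?Ri" using GY_mem[OF gy j] \<open>j < i\<close> subalg_mono by fastforce
  obtain r' where r': "r' \<in> ?Ri" "y i = y j * r'"
    using iterated_Ore_left_multiple[OF io _ GY_mem[OF gy i] yj eq] i by auto
  have "y j * r' \<in> {y i * r | r. r \<in> ?Ri}"
    using r'(2)[symmetric] subalg_one[OF ka] by (metis (mono_tags, lifting) mem_Collect_eq mult_1_right)
  hence "y j \<in> {y i * r | r. r \<in> ?Ri} \<or> r' \<in> {y i * r | r. r \<in> ?Ri}"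
    using prime_elem_inD[OF prime_i yj r'(1)] by blast
  moreover have "y j \<notin> {y i * r | r. r \<in> ?Ri}"
    using GY_not_left_multiple_of_later[OF q gy j i \<open>j < i\<close>] by blast
  ultimately have "r' \<in> {y i * r | r. r \<in> ?Ri}" by blast
  then obtain t' where "r' = t' * y i"
    using prime_elem_in_normal[OF prime_i] by blast
  with r'(2) have cancel: "y i = y j * (t' * y i)" by simp
  have "(1 - y j * t') * y i = y i - y j * (t' * y i)" by (simp add: left_diff_distrib mult.assoc)
  also have "\<dots> = 0" using cancel by (simp only: right_minus_eq)
  finally have "(1 - y j * t') * y i = 0" .
  hence "1 - y j * t' = 0"
    using iterated_Ore_no_zero_divisors[OF io order_refl, unfolded iterated_Ore_UNIV[OF io]]
      GY_nonzero[OF gy i] by blast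
  hence "1 = y j * t'" by simp
  then obtain t'' where "t'' \<in> subalg sc x j" "1 = y j * t''"
    using iterated_Ore_left_multiple[OF io _ subalg_one[OF ka] GY_mem[OF gy j]] j by auto
  thus False
    using prime_elem_in_not_right_invertible[OF GY_prime[OF gy j] subalg.mult] by simp
qed

theorem lemma3p4:
  fixes sc :: "'k::field_char_0 \<Rightarrow> 'r::ring_1"
    and x :: "nat \<Rightarrow> 'r" and N n :: nat
    and \<sigma> \<delta> :: "nat \<Rightarrow> 'r \<Rightarrow> 'r"
    and act :: "(nat \<Rightarrow> 'k) \<Rightarrow> 'r \<Rightarrow> 'r"
    and \<mu> :: "nat \<Rightarrow> nat" and y :: "nat \<Rightarrow> 'r"
  assumes "QNA sc x N \<sigma> \<delta> n act"
    and "GY_elements sc x N n act \<mu> y"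
    and "i \<in> {1..N}" and "j \<in> {1..N}" and "i \<noteq> j"
  shows "y i \<notin> {y j * r | r. True}"
proof -
  have "y i \<noteq> y j * r" for r
  proof (cases "i < j")
    case True
    thus ?thesis using GY_not_left_multiple_of_later assms(1-4) by blast
  next
    case False
    hence "j < i" using assms(5) by simp
    thus ?thesis using GY_not_left_multiple_of_earlier assms(1-4) by blast
  qed
  thus ?thesis by blast
qed

end
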